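(* Let $A\in\mathbb{R}^{n\times n}$ be symmetric positive definite, $b\in\mathbb{R}^n$, and let the $CD$ method (described in the context) be applied to $Ay=b$ with starting point $y_0\in\mathbb{R}^n$ and real parameters $\gamma_k\neq 0$ for all $k\ge 0$. If the directions $p_0,p_1,\dots,p_k$ ($k\ge 0$) are generated by the method, then they are mutually conjugate, i.e. $p_i^TAp_j=0$ for all $0\le i\neq j\le k$.
   Context: The $CD$ method for solving $Ay=b$, with $A$ symmetric positive definite, starting point $y_0\in\mathbb{R}^n$ and nonzero real parameters $\gamma_0,\gamma_1,\dots$, is the following iteration (all norms Euclidean). Set $r_0=b-Ay_0$; if $r_0=0$ stop; set $p_0=r_0$. For $k=0,1,2,\dots$: compute $a_k=\dfrac{r_k^Tp_k}{p_k^TAp_k}$, $y_{k+1}=y_k+a_kp_k$, $r_{k+1}=r_k-a_kAp_k$; if $r_{k+1}=0$ stop; otherwise set $\sigma_k=\gamma_k\dfrac{\|Ap_k\|^2}{p_k^TAp_k}$ and, if $k=0$, $p_1=\gamma_0Ap_0-\sigma_0p_0$, while if $k\ge1$, $\omega_k=\gamma_k\dfrac{(Ap_k)^T(Ap_{k-1})}{p_{k-1}^TAp_{k-1}}$ and $p_{k+1}=\gamma_kAp_k-\sigma_kp_k-\omega_kp_{k-1}$. *)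

theory Defs
  imports "HOL-Analysis.Analysis"
begin

definition sym_pos_def :: "real^'n^'n \<Rightarrow> bool" where
  "sym_pos_def A \<longleftrightarrow> transpose A = A \<and> (\<forall>x. x \<noteq> 0 \<longrightarrow> x \<bullet> (A *v x) > 0)"

text \<open>The CD iteration.  cd_state A b y0 gam k = (y_k, r_k, p_k, p_(k-1)),
  with p_(-1) := 0 (unused).  Stopping is expressed separately: the direction
  p_k is generated by the method iff r_0, ..., r_k are all nonzero.\<close>
fun cd_state :: "real^'n^'n \<Rightarrow> real^'n \<Rightarrow> real^'n \<Rightarrow> (nat \<Rightarrow> real) \<Rightarrow> nat
    \<Rightarrow> (real^'n) \<times> (real^'n) \<times> (real^'n) \<times> (real^'n)" where
  "cd_state A b y0 gam 0 = (y0, b - A *v y0, b - A *v y0, 0)"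
| "cd_state A b y0 gam (Suc k) =
     (let (y, r, p, q) = cd_state A b y0 gam k;
          a = (r \<bullet> p) / (p \<bullet> (A *v p));
          y' = y + a *\<^sub>R p;
          r' = r - a *\<^sub>R (A *v p);
          \<sigma> = gam k * (norm (A *v p))\<^sup>2 / (p \<bullet> (A *v p));
          p' = (if k = 0 then gam 0 *\<^sub>R (A *v p) - \<sigma> *\<^sub>R p
                else (let \<omega> = gam k * ((A *v p) \<bullet> (A *v q)) / (q \<bullet> (A *v q))
                      in gam k *\<^sub>R (A *v p) - \<sigma> *\<^sub>R p - \<omega> *\<^sub>R q))
      in (y', r', p', p))"

definition cd_y where "cd_y A b y0 gam k = fst (cd_state A b y0 gam k)"
definition cd_r where "cd_r A b y0 gam k = fst (snd (cd_state A b y0 gam k))"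
definition cd_p where "cd_p A b y0 gam k = fst (snd (snd (cd_state A b y0 gam k)))"

definition cd_generated where
  "cd_generated A b y0 gam k \<longleftrightarrow> (\<forall>j\<le>k. cd_r A b y0 gam j \<noteq> 0)"

end

theory Submission
  imports Defs
begin

text \<open>By induction on \<open>m\<close> one proves together: \<open>p\<^sub>0, \<dots>, p\<^sub>m\<close> are mutually \<open>A\<close>-conjugate,
  nonzero, and \<open>r\<^sub>m\<close> is orthogonal to \<open>p\<^sub>0, \<dots>, p\<^sub>m\<^sub>-\<^sub>1\<close>.  The three-term recurrence makes
  \<open>p\<^sub>m\<^sub>+\<^sub>1\<close> conjugate to \<open>p\<^sub>m\<close> and \<open>p\<^sub>m\<^sub>-\<^sub>1\<close> by the choice of \<open>\<sigma>\<^sub>m, \<omega>\<^sub>m\<close>, and to older \<open>p\<^sub>j\<close>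
  because \<open>A p\<^sub>j\<close> is a combination of \<open>p\<^sub>j\<^sub>+\<^sub>1, p\<^sub>j, p\<^sub>j\<^sub>-\<^sub>1\<close>, all conjugate to \<open>p\<^sub>m\<close>.  The step
  length \<open>a\<^sub>m\<close> makes \<open>r\<^sub>m\<^sub>+\<^sub>1 \<bottom> p\<^sub>m\<close>.  Finally \<open>r\<^sub>m\<^sub>+\<^sub>1\<close> lies in the span of \<open>p\<^sub>0, \<dots>, p\<^sub>m\<^sub>+\<^sub>1\<close> and is
  orthogonal to \<open>p\<^sub>0, \<dots>, p\<^sub>m\<close>, so \<open>p\<^sub>m\<^sub>+\<^sub>1 = 0\<close> would force \<open>r\<^sub>m\<^sub>+\<^sub>1 = 0\<close>.\<close>

definition conjugate_upto :: "real^'n^'n \<Rightarrow> (nat \<Rightarrow> real^'n) \<Rightarrow> nat \<Rightarrow> bool" where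
  "conjugate_upto A v m \<longleftrightarrow> (\<forall>i\<le>m. \<forall>j\<le>m. i \<noteq> j \<longrightarrow> v i \<bullet> (A *v v j) = 0)"

definition cd_p_prev where "cd_p_prev A b y0 gam k = snd (snd (snd (cd_state A b y0 gam k)))"

lemma cd_p_prev_0: "cd_p_prev A b y0 gam 0 = 0"
  by (simp add: cd_p_prev_def)

lemma cd_p_prev_Suc: "cd_p_prev A b y0 gam (Suc k) = cd_p A b y0 gam k"
  by (simp add: cd_p_prev_def cd_p_def Let_def split: prod.split)

lemma cd_r_0: "cd_r A b y0 gam 0 = cd_p A b y0 gam 0"
  by (simp add: cd_r_def cd_p_def)

lemma cd_r_Suc: "cd_r A b y0 gam (Suc k) = cd_r A b y0 gam k -
   ((cd_r A b y0 gam k \<bullet> cd_p A b y0 gam k) / (cd_p A b y0 gam k \<bullet> (A *v cd_p A b y0 gam k)))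
     *\<^sub>R (A *v cd_p A b y0 gam k)"
  by (simp add: cd_r_def cd_p_def Let_def split: prod.split)

text \<open>For \<open>k = 0\<close> the \<open>\<omega>\<close>-term vanishes since the previous direction is \<open>0\<close>.\<close>

lemma cd_p_Suc: "cd_p A b y0 gam (Suc k) = gam k *\<^sub>R (A *v cd_p A b y0 gam k)
   - (gam k * (norm (A *v cd_p A b y0 gam k))\<^sup>2
       / (cd_p A b y0 gam k \<bullet> (A *v cd_p A b y0 gam k))) *\<^sub>R cd_p A b y0 gam k
   - (gam k * ((A *v cd_p A b y0 gam k) \<bullet> (A *v cd_p_prev A b y0 gam k))
       / (cd_p_prev A b y0 gam k \<bullet> (A *v cd_p_prev A b y0 gam k))) *\<^sub>R cd_p_prev A b y0 gam k"
  by (cases k) (simp_all add: cd_p_prev_def cd_p_def Let_def split: prod.split)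

lemma inner_cd_p_Suc: "cd_p A b y0 gam (Suc k) \<bullet> v =
     gam k * ((A *v cd_p A b y0 gam k) \<bullet> v)
   - (gam k * (norm (A *v cd_p A b y0 gam k))\<^sup>2
       / (cd_p A b y0 gam k \<bullet> (A *v cd_p A b y0 gam k))) * (cd_p A b y0 gam k \<bullet> v)
   - (gam k * ((A *v cd_p A b y0 gam k) \<bullet> (A *v cd_p_prev A b y0 gam k))
       / (cd_p_prev A b y0 gam k \<bullet> (A *v cd_p_prev A b y0 gam k))) * (cd_p_prev A b y0 gam k \<bullet> v)"
  unfolding cd_p_Suc[of A b y0 gam k] by (simp add: inner_diff_left)

lemma inner_cd_r_Suc: "cd_r A b y0 gam (Suc k) \<bullet> v = cd_r A b y0 gam k \<bullet> v
   - ((cd_r A b y0 gam k \<bullet> cd_p A b y0 gam k) / (cd_p A b y0 gam k \<bullet> (A *v cd_p A b y0 gam k)))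
       * ((A *v cd_p A b y0 gam k) \<bullet> v)"
  unfolding cd_r_Suc[of A b y0 gam k] by (simp add: inner_diff_left)

lemma symmetric_matrix_inner:
  fixes A :: "real^'n^'n"
  assumes "transpose A = A"
  shows "(A *v x) \<bullet> y = x \<bullet> (A *v y)"
  by (metis assms dot_lmul_matrix vector_transpose_matrix)

lemma orthogonal_to_span_inner:
  fixes x y :: "'a::real_inner"
  assumes "x \<in> span S" "\<forall>s\<in>S. y \<bullet> s = 0"
  shows "y \<bullet> x = 0"
  using orthogonal_to_span[OF assms(1), of y] assms(2) unfolding orthogonal_def by blast

locale cd_method =
  fixes A :: "real^'n^'n" and b y0 :: "real^'n" and gam :: "nat \<Rightarrow> real"
  assumes spd: "sym_pos_def A" and gam_nonzero: "\<forall>j. gam j \<noteq> 0"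
begin

abbreviation "p \<equiv> cd_p A b y0 gam"
abbreviation "q \<equiv> cd_p_prev A b y0 gam"
abbreviation "r \<equiv> cd_r A b y0 gam"

lemma A_self_adjoint: "(A *v x) \<bullet> y = x \<bullet> (A *v y)"
  using spd symmetric_matrix_inner sym_pos_def_def by blast

lemma A_form_commute: "x \<bullet> (A *v y) = y \<bullet> (A *v x)"
  by (metis A_self_adjoint inner_commute)

lemma A_form_pos: "x \<noteq> 0 \<Longrightarrow> x \<bullet> (A *v x) > 0"
  using spd sym_pos_def_def by blast

lemma A_mult_cd_p: "A *v p k = (1 / gam k) *\<^sub>R (p (Suc k)
   + (gam k * (norm (A *v p k))\<^sup>2 / (p k \<bullet> (A *v p k))) *\<^sub>R p k
   + (gam k * ((A *v p k) \<bullet> (A *v q k)) / (q k \<bullet> (A *v q k))) *\<^sub>R q k)"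
  using gam_nonzero unfolding cd_p_Suc[of A b y0 gam k] by (simp add: scaleR_diff_right)

lemma cd_p_prev_in_span: "q k \<in> span (p ` {..k})"
  by (cases k) (simp_all add: cd_p_prev_0 cd_p_prev_Suc span_zero span_base)

lemma cd_r_in_span: "r m \<in> span (p ` {..m})"
proof (induction m)
  case 0
  then show ?case by (simp add: cd_r_0 span_base)
next
  case (Suc m)
  have mono: "span (p ` {..m}) \<subseteq> span (p ` {..Suc m})"
    by (intro span_mono image_mono) auto
  have "A *v p m \<in> span (p ` {..Suc m})"
    using mono cd_p_prev_in_span[of m]
    by (subst A_mult_cd_p) (intro span_mul span_add; auto intro: span_base)
  then show ?case
    unfolding cd_r_Suc using Suc mono by (intro span_diff span_mul) auto
qed

lemma cd_p_prev_conjugate: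
  assumes "conjugate_upto A p m" "i \<le> m" "j \<le> m" "j \<noteq> Suc i"
  shows "q j \<bullet> (A *v p i) = 0"
  using assms by (cases j) (auto simp: cd_p_prev_0 cd_p_prev_Suc conjugate_upto_def)

lemma cd_p_Suc_conjugate:
  assumes conj: "conjugate_upto A p m" and nonzero: "\<forall>j\<le>m. p j \<noteq> 0" and "j \<le> m"
  shows "p (Suc m) \<bullet> (A *v p j) = 0"
proof -
  have pos: "p i \<bullet> (A *v p i) > 0" if "i \<le> m" for i
    using nonzero that A_form_pos by blast
  have pp: "p i \<bullet> (A *v p l) = 0" if "i \<le> m" "l \<le> m" "i \<noteq> l" for i l
    using conj that unfolding conjugate_upto_def by blast
  consider "j = m" | "Suc j = m" | "Suc j < m"
    using \<open>j \<le> m\<close> by linarith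
  then show ?thesis
  proof cases
    case 1
    have "(A *v p m) \<bullet> (A *v p m) = (norm (A *v p m))\<^sup>2"
      by (simp add: power2_norm_eq_inner)
    moreover have "q m \<bullet> (A *v p m) = 0"
      using cd_p_prev_conjugate[OF conj, of m m] by simp
    ultimately show ?thesis
      using 1 pos[of m] unfolding inner_cd_p_Suc by simp
  next
    case 2
    then have "q m = p j"
      using cd_p_prev_Suc by metis
    moreover have "p m \<bullet> (A *v p j) = 0"
      using pp 2 by auto
    ultimately show ?thesis
      using pos[of j] 2 unfolding inner_cd_p_Suc by (simp add: A_self_adjoint)
  next
    case 3
    text \<open>Expand \<open>A p\<^sub>j\<close> by the recurrence; each of \<open>p\<^sub>j\<^sub>+\<^sub>1, p\<^sub>j, p\<^sub>j\<^sub>-\<^sub>1\<close> is conjugate to \<open>p\<^sub>m\<close>.\<close>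
    have "(A *v p m) \<bullet> (A *v p j) = (A *v p j) \<bullet> (A *v p m)"
      by (simp add: inner_commute)
    also have "\<dots> = 0"
      using pp[of "Suc j" m] pp[of j m] cd_p_prev_conjugate[OF conj, of m j] 3
      by (subst A_mult_cd_p[of j]) (simp add: inner_add_left)
    finally show ?thesis
      using pp[of m j] cd_p_prev_conjugate[OF conj, of j m] 3
      unfolding inner_cd_p_Suc by simp
  qed
qed

lemma cd_r_Suc_orthogonal:
  assumes "conjugate_upto A p m" "p m \<noteq> 0" "\<forall>j<m. r m \<bullet> p j = 0" "j \<le> m"
  shows "r (Suc m) \<bullet> p j = 0"
proof (cases "j = m")
  case True
  then show ?thesis
    using A_form_pos[OF assms(2)] unfolding inner_cd_r_Suc by (simp add: A_self_adjoint)
next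
  case False
  then show ?thesis
    using assms unfolding conjugate_upto_def inner_cd_r_Suc by (simp add: A_self_adjoint)
qed

lemma cd_p_Suc_nonzero:
  assumes "r (Suc m) \<noteq> 0" "\<forall>j\<le>m. r (Suc m) \<bullet> p j = 0"
  shows "p (Suc m) \<noteq> 0"
proof
  assume "p (Suc m) = 0"
  then have "p ` {..Suc m} = insert 0 (p ` {..m})"
    by (auto simp: atMost_Suc)
  then have "r (Suc m) \<in> span (p ` {..m})"
    using cd_r_in_span[of "Suc m"] by (simp add: span_insert_0)
  then have "r (Suc m) \<bullet> r (Suc m) = 0"
    using assms(2) by (intro orthogonal_to_span_inner) auto
  with assms(1) show False
    by simp
qed

lemma cd_invariant:
  assumes "\<forall>j\<le>m. r j \<noteq> 0"
  shows "conjugate_upto A p m \<and> (\<forall>j\<le>m. p j \<noteq> 0) \<and> (\<forall>j<m. r m \<bullet> p j = 0)"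
  using assms
proof (induction m)
  case 0
  then show ?case
    by (auto simp: conjugate_upto_def cd_r_0)
next
  case (Suc m)
  then have conj: "conjugate_upto A p m" and nonzero: "\<forall>j\<le>m. p j \<noteq> 0"
    and orth: "\<forall>j<m. r m \<bullet> p j = 0"
    by auto
  have new_conj: "p (Suc m) \<bullet> (A *v p j) = 0" if "j \<le> m" for j
    using cd_p_Suc_conjugate[OF conj nonzero that] .
  have new_orth: "\<forall>j\<le>m. r (Suc m) \<bullet> p j = 0"
    using cd_r_Suc_orthogonal[OF conj _ orth] nonzero by blast
  have "conjugate_upto A p (Suc m)"
    using conj new_conj A_form_commute
    unfolding conjugate_upto_def by (metis le_Suc_eq)
  moreover have "p (Suc m) \<noteq> 0"
    using cd_p_Suc_nonzero Suc.prems new_orth by blast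
  ultimately show ?case
    using nonzero new_orth by (auto simp: le_Suc_eq less_Suc_eq_le)
qed

end

theorem theorem1:
  fixes A :: "real^'n^'n" and b y0 :: "real^'n" and gam :: "nat \<Rightarrow> real" and k :: nat
  assumes "sym_pos_def A"
    and "\<forall>j. gam j \<noteq> 0"
    and "cd_generated A b y0 gam k"
  shows "\<forall>i\<le>k. \<forall>j\<le>k. i \<noteq> j \<longrightarrow> cd_p A b y0 gam i \<bullet> (A *v cd_p A b y0 gam j) = 0"
  using cd_method.cd_invariant[OF cd_method.intro[OF assms(1,2)], of k] assms(3)
  unfolding cd_generated_def conjugate_upto_def by blast

end
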